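(* Let $\mathcal Z,\mathcal S$ be finite, $f:\mathcal Z\times\mathcal S\to\mathbb R$, and $(Z_i,S_i)$, $i=1,\dots,n$, random variables with a common joint law $P_{ZS}$ (not depending on $i$) such that $\Pr[\mathbf S=\mathbf s\mid\mathbf Z=\mathbf z]=\prod_{i=1}^n\Pr[S_i=s_i\mid Z_i=z_i]$. Let $P_{S|Z}$ be the conditional of $P_{ZS}$. Then for every type $p$ with $\Pr[\hat p_{\mathbf Z}=p]>0$, $$\mathbb E\Big[\Big(\sum_{i=1}^n f(Z_i,S_i)\Big)^2\Big|\ \hat p_{\mathbf Z}=p\Big]=n^2\,\mathbb E_{P_{S|Z}\times p}[f(\tilde Z,S)]^2+n\,\mathbb E_{P_{S|Z}\times p}[f(\tilde Z,S)^2]-n\,\mathbb E_{p}\Big[\mathbb E_{P_{S|Z}}[f(\tilde Z,S)\mid\tilde Z]^2\Big],$$ where $(\tilde Z,S)$ has joint pmf $p(z)P_{S|Z}(s|z)$.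
   Context: $\mathbf Z=(Z_1,\dots,Z_n)$, $\mathbf S=(S_1,\dots,S_n)$; $\hat p_{\mathbf Z}$ is the empirical distribution (type) of $\mathbf Z$. *)

theory Defs
  imports "HOL-Probability.Probability"
begin

text \<open>Conditional probability of event A given event B (0 if P(B)=0).\<close>
definition cprob :: "'a measure \<Rightarrow> 'a set \<Rightarrow> 'a set \<Rightarrow> real" where
  "cprob M A B = measure M (A \<inter> B) / measure M B"

definition cexp_event :: "'a measure \<Rightarrow> ('a \<Rightarrow> real) \<Rightarrow> 'a set \<Rightarrow> real" where
  "cexp_event M X A = (\<integral>\<omega>. indicator A \<omega> * X \<omega> \<partial>M) / measure M A"

definition emp_type :: "nat \<Rightarrow> (nat \<Rightarrow> 'a \<Rightarrow> 'z) \<Rightarrow> 'a \<Rightarrow> 'z \<Rightarrow> real" where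
  "emp_type n Z \<omega> = (\<lambda>a. real (card {i\<in>{1..n}. Z i \<omega> = a}) / real n)"

definition cond_pmf :: "('z \<times> 's::finite \<Rightarrow> real) \<Rightarrow> 'z \<Rightarrow> 's \<Rightarrow> real" where
  "cond_pmf PZS z s = PZS (z, s) / (\<Sum>s'\<in>UNIV. PZS (z, s'))"

end

theory Submission
  imports Defs
begin

(* Given Z = zz, the S_i are independent with laws P_{S|Z}(. | zz_i), so the conditional second
   moment of the sum is (sum_i m(zz_i))^2 + sum_i (v(zz_i) - m(zz_i)^2), where m and v are the
   conditional first and second moments of f(z, S) given z. Sums of the form sum_i h(zz_i) equal
   n E_p[h] whenever zz has type p, so this value is the same for every zz of type p, and the
   event {type = p} is the disjoint union of the events {Z = zz} over such zz. *)

lemma integral_finite_range: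
  fixes g :: "'a \<Rightarrow> 'b" and H :: "'b \<Rightarrow> real"
  assumes "finite_measure M" "finite B" "\<And>\<omega>. \<omega> \<in> space M \<Longrightarrow> g \<omega> \<in> B"
    and "\<And>b. b \<in> B \<Longrightarrow> {\<omega>\<in>space M. g \<omega> = b} \<in> sets M"
  shows "(\<integral>\<omega>. H (g \<omega>) \<partial>M) = (\<Sum>b\<in>B. measure M {\<omega>\<in>space M. g \<omega> = b} * H b)"
proof -
  interpret finite_measure M by fact
  have "(\<integral>\<omega>. H (g \<omega>) \<partial>M) = (\<integral>\<omega>. (\<Sum>b\<in>B. indicator {\<omega>\<in>space M. g \<omega> = b} \<omega> * H b) \<partial>M)"
    using assms(2,3) by (intro Bochner_Integration.integral_cong) (auto simp: indicator_def sum.If_cases Int_absorb1)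
  also have "\<dots> = (\<Sum>b\<in>B. measure M {\<omega>\<in>space M. g \<omega> = b} * H b)"
    using assms(4) by (subst Bochner_Integration.integral_sum) (auto simp: Int_absorb1 less_top[symmetric])
  finally show ?thesis .
qed

lemma sum_PiE_prod_mult_pair:
  fixes c g :: "'i \<Rightarrow> 's::finite \<Rightarrow> real"
  assumes I: "finite I" "i \<in> I" "j \<in> I" and one: "\<And>k. k \<in> I \<Longrightarrow> (\<Sum>s\<in>UNIV. c k s) = 1"
  shows "(\<Sum>ss\<in>PiE I (\<lambda>_. UNIV). (\<Prod>k\<in>I. c k (ss k)) * (g i (ss i) * g j (ss j)))
       = (if i = j then (\<Sum>s\<in>UNIV. c i s * (g i s)\<^sup>2)
          else (\<Sum>s\<in>UNIV. c i s * g i s) * (\<Sum>s\<in>UNIV. c j s * g j s))"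
    (is "_ = ?rhs")
proof -
  \<comment> \<open>writing g i (ss i) * g j (ss j) as a product over k makes the sum over ss factorize\<close>
  define h where "h k s = (if k = i then g i s else 1) * (if k = j then g j s else 1)" for k s
  have "(\<Sum>ss\<in>PiE I (\<lambda>_. UNIV). (\<Prod>k\<in>I. c k (ss k)) * (g i (ss i) * g j (ss j)))
      = (\<Sum>ss\<in>PiE I (\<lambda>_. UNIV). \<Prod>k\<in>I. c k (ss k) * h k (ss k))"
    using I by (simp add: h_def prod.distrib prod.delta)
  also have "\<dots> = (\<Prod>k\<in>I. \<Sum>s\<in>UNIV. c k s * h k s)"
    using I by (simp add: prod_sum_PiE)
  also have "\<dots> = (\<Prod>k\<in>I. if k = i then (\<Sum>s\<in>UNIV. c k s * h k s) else 1)
      * (\<Prod>k\<in>I. if k = j \<and> j \<noteq> i then (\<Sum>s\<in>UNIV. c k s * h k s) else 1)"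
    using one by (subst prod.distrib[symmetric], intro prod.cong) (auto simp: h_def)
  also have "\<dots> = ?rhs"
    using I by (auto simp: prod.delta h_def power2_eq_square mult.assoc)
  finally show ?thesis .
qed

lemma sum_sum_if_diag:
  fixes V m :: "'i \<Rightarrow> real"
  assumes "finite I"
  shows "(\<Sum>i\<in>I. \<Sum>j\<in>I. if i = j then V i else m i * m j)
       = (\<Sum>i\<in>I. m i)\<^sup>2 + (\<Sum>i\<in>I. V i) - (\<Sum>i\<in>I. (m i)\<^sup>2)"
proof -
  have "(\<Sum>j\<in>I. if i = j then V i else m i * m j) = (\<Sum>j\<in>I. m i * m j) + (V i - (m i)\<^sup>2)"
    if "i \<in> I" for i
    using assms that by (simp add: sum.If_cases power2_eq_square sum.remove Diff_eq algebra_simps)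
  then show ?thesis
    by (simp add: sum.distrib sum_subtractf power2_eq_square sum_product)
qed

lemma sum_PiE_prod_square_sum:
  fixes c g :: "'i \<Rightarrow> 's::finite \<Rightarrow> real"
  assumes I: "finite I" and one: "\<And>k. k \<in> I \<Longrightarrow> (\<Sum>s\<in>UNIV. c k s) = 1"
  shows "(\<Sum>ss\<in>PiE I (\<lambda>_. UNIV). (\<Prod>k\<in>I. c k (ss k)) * (\<Sum>i\<in>I. g i (ss i))\<^sup>2)
       = (\<Sum>i\<in>I. \<Sum>s\<in>UNIV. c i s * g i s)\<^sup>2 + (\<Sum>i\<in>I. \<Sum>s\<in>UNIV. c i s * (g i s)\<^sup>2)
         - (\<Sum>i\<in>I. (\<Sum>s\<in>UNIV. c i s * g i s)\<^sup>2)"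
proof -
  have "(\<Sum>ss\<in>PiE I (\<lambda>_. UNIV). (\<Prod>k\<in>I. c k (ss k)) * (\<Sum>i\<in>I. g i (ss i))\<^sup>2)
      = (\<Sum>i\<in>I. \<Sum>j\<in>I. \<Sum>ss\<in>PiE I (\<lambda>_. UNIV). (\<Prod>k\<in>I. c k (ss k)) * (g i (ss i) * g j (ss j)))"
    unfolding power2_eq_square sum_product unfolding sum_distrib_left
    by (simp add: sum.swap[of _ "PiE I (\<lambda>_. UNIV)"] sum.swap[of _ "PiE I (\<lambda>_. UNIV)" I])
  also have "\<dots> = (\<Sum>i\<in>I. \<Sum>j\<in>I. if i = j then (\<Sum>s\<in>UNIV. c i s * (g i s)\<^sup>2)
      else (\<Sum>s\<in>UNIV. c i s * g i s) * (\<Sum>s\<in>UNIV. c j s * g j s))"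
    using I one by (intro sum.cong refl sum_PiE_prod_mult_pair) auto
  finally show ?thesis
    using I by (simp only: sum_sum_if_diag)
qed

definition vec_type :: "nat \<Rightarrow> (nat \<Rightarrow> 'z) \<Rightarrow> 'z \<Rightarrow> real" where
  "vec_type n zz = (\<lambda>a. real (card {i\<in>{1..n}. zz i = a}) / real n)"

lemma sum_by_vec_type:
  fixes zz :: "nat \<Rightarrow> 'z::finite" and h :: "'z \<Rightarrow> real"
  assumes "vec_type n zz = p"
  shows "(\<Sum>i\<in>{1..n}. h (zz i)) = real n * (\<Sum>z\<in>UNIV. p z * h z)"
proof -
  have card: "real (card {i\<in>{1..n}. zz i = z}) = real n * p z" for z
    using assms by (cases "n = 0") (auto simp: vec_type_def)
  have "(\<Sum>i\<in>{1..n}. h (zz i)) = (\<Sum>z\<in>UNIV. \<Sum>i\<in>{i\<in>{1..n}. zz i = z}. h (zz i))"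
    by (rule sum.group [symmetric]) auto
  also have "\<dots> = (\<Sum>z\<in>UNIV. \<Sum>i\<in>{i\<in>{1..n}. zz i = z}. h z)"
    by (intro sum.cong) auto
  also have "\<dots> = real n * (\<Sum>z\<in>UNIV. p z * h z)"
    by (simp only: sum_constant card) (simp add: sum_distrib_left mult.assoc)
  finally show ?thesis .
qed

lemma sum_PiE_type_square_sum:
  fixes zz :: "nat \<Rightarrow> 'z::finite" and c :: "'z \<Rightarrow> 's::finite \<Rightarrow> real" and f :: "'z \<times> 's \<Rightarrow> real"
  assumes type: "vec_type n zz = p" and one: "\<And>i. i \<in> {1..n} \<Longrightarrow> (\<Sum>s\<in>UNIV. c (zz i) s) = 1"
  shows "(\<Sum>ss\<in>PiE {1..n} (\<lambda>_. UNIV). (\<Prod>i\<in>{1..n}. c (zz i) (ss i)) * (\<Sum>i\<in>{1..n}. f (zz i, ss i))\<^sup>2)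
       = (real n)\<^sup>2 * (\<Sum>z\<in>UNIV. \<Sum>s\<in>UNIV. p z * c z s * f (z, s))\<^sup>2
         + real n * (\<Sum>z\<in>UNIV. \<Sum>s\<in>UNIV. p z * c z s * (f (z, s))\<^sup>2)
         - real n * (\<Sum>z\<in>UNIV. p z * (\<Sum>s\<in>UNIV. c z s * f (z, s))\<^sup>2)"
proof -
  define m where "m z = (\<Sum>s\<in>UNIV. c z s * f (z, s))" for z
  define v where "v z = (\<Sum>s\<in>UNIV. c z s * (f (z, s))\<^sup>2)" for z
  have "(\<Sum>ss\<in>PiE {1..n} (\<lambda>_. UNIV). (\<Prod>i\<in>{1..n}. c (zz i) (ss i)) * (\<Sum>i\<in>{1..n}. f (zz i, ss i))\<^sup>2)
      = (\<Sum>i\<in>{1..n}. m (zz i))\<^sup>2 + (\<Sum>i\<in>{1..n}. v (zz i)) - (\<Sum>i\<in>{1..n}. (m (zz i))\<^sup>2)"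
    unfolding m_def v_def by (rule sum_PiE_prod_square_sum) (auto intro: one)
  also have "\<dots> = (real n * (\<Sum>z\<in>UNIV. p z * m z))\<^sup>2 + real n * (\<Sum>z\<in>UNIV. p z * v z)
      - real n * (\<Sum>z\<in>UNIV. p z * (m z)\<^sup>2)"
    by (simp only: sum_by_vec_type[OF type, of m] sum_by_vec_type[OF type, of v]
        sum_by_vec_type[OF type, of "\<lambda>z. (m z)\<^sup>2"])
  also have "(\<Sum>z\<in>UNIV. p z * m z) = (\<Sum>z\<in>UNIV. \<Sum>s\<in>UNIV. p z * c z s * f (z, s))"
    by (simp add: m_def sum_distrib_left mult.assoc)
  also have "(\<Sum>z\<in>UNIV. p z * v z) = (\<Sum>z\<in>UNIV. \<Sum>s\<in>UNIV. p z * c z s * (f (z, s))\<^sup>2)"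
    by (simp add: v_def sum_distrib_left mult.assoc)
  finally show ?thesis
    by (simp only: m_def power_mult_distrib)
qed

lemma sum_cond_pmf:
  "(\<Sum>s\<in>UNIV. PZS (z, s)) \<noteq> 0 \<Longrightarrow> (\<Sum>s\<in>UNIV. cond_pmf PZS z s) = 1"
  by (simp add: cond_pmf_def sum_divide_distrib[symmetric])

locale memoryless_channel = prob_space M for M :: "'a measure" +
  fixes n :: nat and Z :: "nat \<Rightarrow> 'a \<Rightarrow> 'z::finite" and S :: "nat \<Rightarrow> 'a \<Rightarrow> 's::finite"
    and PZS :: "'z \<times> 's \<Rightarrow> real"
  assumes Z_measurable: "\<And>i. i \<in> {1..n} \<Longrightarrow> Z i \<in> measurable M (count_space UNIV)"
    and S_measurable: "\<And>i. i \<in> {1..n} \<Longrightarrow> S i \<in> measurable M (count_space UNIV)"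
    and common_law: "\<And>i z s. i \<in> {1..n} \<Longrightarrow>
        measure M {\<omega>\<in>space M. Z i \<omega> = z \<and> S i \<omega> = s} = PZS (z, s)"
    and cond_indep: "\<And>(zz :: nat \<Rightarrow> 'z) (ss :: nat \<Rightarrow> 's).
        measure M {\<omega>\<in>space M. \<forall>i\<in>{1..n}. Z i \<omega> = zz i} > 0 \<Longrightarrow>
        cprob M {\<omega>\<in>space M. \<forall>i\<in>{1..n}. S i \<omega> = ss i}
                {\<omega>\<in>space M. \<forall>i\<in>{1..n}. Z i \<omega> = zz i}
        = (\<Prod>i\<in>{1..n}. cprob M {\<omega>\<in>space M. S i \<omega> = ss i} {\<omega>\<in>space M. Z i \<omega> = zz i})"
begin

definition Z_event :: "(nat \<Rightarrow> 'z) \<Rightarrow> 'a set" where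
  "Z_event zz = {\<omega>\<in>space M. \<forall>i\<in>{1..n}. Z i \<omega> = zz i}"

definition S_event :: "(nat \<Rightarrow> 's) \<Rightarrow> 'a set" where
  "S_event ss = {\<omega>\<in>space M. \<forall>i\<in>{1..n}. S i \<omega> = ss i}"

(* Restricting to {1..n} makes the random vectors range over the finite sets PiE {1..n} UNIV. *)
definition Zvec :: "'a \<Rightarrow> nat \<Rightarrow> 'z" where
  "Zvec \<omega> = restrict (\<lambda>i. Z i \<omega>) {1..n}"

definition Svec :: "'a \<Rightarrow> nat \<Rightarrow> 's" where
  "Svec \<omega> = restrict (\<lambda>i. S i \<omega>) {1..n}"

lemma sets_Z_eq: "i \<in> {1..n} \<Longrightarrow> {\<omega>\<in>space M. Z i \<omega> = z} \<in> sets M"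
  using pred_count_space_const1[OF Z_measurable] by (simp add: pred_def)

lemma sets_S_eq: "i \<in> {1..n} \<Longrightarrow> {\<omega>\<in>space M. S i \<omega> = s} \<in> sets M"
  using pred_count_space_const1[OF S_measurable] by (simp add: pred_def)

lemma sets_Z_event: "Z_event zz \<in> sets M"
  unfolding Z_event_def by (intro sets.sets_Collect_finite_All sets_Z_eq) auto

lemma sets_S_event: "S_event ss \<in> sets M"
  unfolding S_event_def by (intro sets.sets_Collect_finite_All sets_S_eq) auto

lemma prob_Z_eq:
  assumes i: "i \<in> {1..n}"
  shows "prob {\<omega>\<in>space M. Z i \<omega> = z} = (\<Sum>s\<in>UNIV. PZS (z, s))"
proof -
  have "{\<omega>\<in>space M. Z i \<omega> = z} = (\<Union>s. {\<omega>\<in>space M. Z i \<omega> = z \<and> S i \<omega> = s})"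
    by auto
  also have "prob \<dots> = (\<Sum>s\<in>UNIV. prob {\<omega>\<in>space M. Z i \<omega> = z \<and> S i \<omega> = s})"
    using i sets_Z_eq sets_S_eq
    by (intro finite_measure_finite_Union) (auto simp: disjoint_family_on_def)
  finally show ?thesis
    using i by (simp add: common_law)
qed

lemma cprob_S_eq_Z_eq:
  assumes "i \<in> {1..n}"
  shows "cprob M {\<omega>\<in>space M. S i \<omega> = s} {\<omega>\<in>space M. Z i \<omega> = z} = cond_pmf PZS z s"
proof -
  have "{\<omega>\<in>space M. S i \<omega> = s} \<inter> {\<omega>\<in>space M. Z i \<omega> = z} = {\<omega>\<in>space M. Z i \<omega> = z \<and> S i \<omega> = s}"
    by auto
  then show ?thesis
    using assms by (simp add: cprob_def cond_pmf_def prob_Z_eq common_law)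
qed

lemma prob_Z_event_S_event:
  "prob (Z_event zz \<inter> S_event ss) = prob (Z_event zz) * (\<Prod>i\<in>{1..n}. cond_pmf PZS (zz i) (ss i))"
proof (cases "prob (Z_event zz) = 0")
  case True
  then show ?thesis
    using finite_measure_mono[OF Int_lower1 sets_Z_event, of zz "S_event ss"]
    by (simp add: measure_le_0_iff)
next
  case False
  then have "cprob M (S_event ss) (Z_event zz) = (\<Prod>i\<in>{1..n}. cond_pmf PZS (zz i) (ss i))"
    using cond_indep[of zz ss] by (simp add: Z_event_def S_event_def cprob_S_eq_Z_eq zero_less_measure_iff)
  then show ?thesis
    using False by (simp add: cprob_def Int_commute field_simps)
qed

lemma sum_cond_pmf_Z_event:
  assumes "prob (Z_event zz) > 0" and i: "i \<in> {1..n}"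
  shows "(\<Sum>s\<in>UNIV. cond_pmf PZS (zz i) s) = 1"
proof (rule sum_cond_pmf)
  have "prob (Z_event zz) \<le> prob {\<omega>\<in>space M. Z i \<omega> = zz i}"
    using i by (intro finite_measure_mono sets_Z_eq) (auto simp: Z_event_def)
  then show "(\<Sum>s\<in>UNIV. PZS (zz i, s)) \<noteq> 0"
    using assms by (simp add: prob_Z_eq)
qed

lemma integral_Zvec_Svec:
  fixes W :: "(nat \<Rightarrow> 'z) \<Rightarrow> (nat \<Rightarrow> 's) \<Rightarrow> real"
  shows "(\<integral>\<omega>. W (Zvec \<omega>) (Svec \<omega>) \<partial>M)
    = (\<Sum>zz\<in>PiE {1..n} (\<lambda>_. UNIV). prob (Z_event zz)
        * (\<Sum>ss\<in>PiE {1..n} (\<lambda>_. UNIV). (\<Prod>i\<in>{1..n}. cond_pmf PZS (zz i) (ss i)) * W zz ss))"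
proof -
  let ?B = "PiE {1..n} (\<lambda>_. UNIV :: 'z set)" and ?C = "PiE {1..n} (\<lambda>_. UNIV :: 's set)"
  have level_set: "{\<omega>\<in>space M. (Zvec \<omega>, Svec \<omega>) = b} = Z_event (fst b) \<inter> S_event (snd b)"
    if "b \<in> ?B \<times> ?C" for b
    using that by (auto simp: Zvec_def Svec_def Z_event_def S_event_def PiE_def extensional_def)
  have "(\<integral>\<omega>. case_prod W (Zvec \<omega>, Svec \<omega>) \<partial>M)
      = (\<Sum>b\<in>?B \<times> ?C. prob {\<omega>\<in>space M. (Zvec \<omega>, Svec \<omega>) = b} * case_prod W b)"
  proof (rule integral_finite_range)
    show "\<And>b. b \<in> ?B \<times> ?C \<Longrightarrow> {\<omega>\<in>space M. (Zvec \<omega>, Svec \<omega>) = b} \<in> sets M"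
      by (simp add: level_set sets_Z_event sets_S_event sets.Int)
  qed (auto simp: finite_PiE finite_measure_axioms Zvec_def Svec_def)
  also have "\<dots> = (\<Sum>b\<in>?B \<times> ?C. prob (Z_event (fst b) \<inter> S_event (snd b)) * case_prod W b)"
    by (intro sum.cong refl) (simp add: level_set)
  also have "\<dots> = (\<Sum>zz\<in>?B. \<Sum>ss\<in>?C. prob (Z_event zz \<inter> S_event ss) * W zz ss)"
    by (simp add: sum.cartesian_product')
  finally show ?thesis
    by (simp add: prob_Z_event_S_event sum_distrib_left mult.assoc)
qed

lemma integral_type_event:
  fixes W :: "(nat \<Rightarrow> 'z) \<Rightarrow> (nat \<Rightarrow> 's) \<Rightarrow> real"
  assumes "\<And>zz. vec_type n zz = p \<Longrightarrow> prob (Z_event zz) > 0 \<Longrightarrow>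
      (\<Sum>ss\<in>PiE {1..n} (\<lambda>_. UNIV). (\<Prod>i\<in>{1..n}. cond_pmf PZS (zz i) (ss i)) * W zz ss) = K"
  shows "(\<integral>\<omega>. indicator {\<omega>\<in>space M. emp_type n Z \<omega> = p} \<omega> * W (Zvec \<omega>) (Svec \<omega>) \<partial>M)
    = prob {\<omega>\<in>space M. emp_type n Z \<omega> = p} * K"
proof -
  let ?A = "{\<omega>\<in>space M. emp_type n Z \<omega> = p}"
  define D where "D = (\<Sum>zz\<in>PiE {1..n} (\<lambda>_. UNIV). if vec_type n zz = p then prob (Z_event zz) else 0)"
  have emp_type_Zvec: "emp_type n Z \<omega> = vec_type n (Zvec \<omega>)" for \<omega>
  proof -
    have "{i\<in>{1..n}. Zvec \<omega> i = a} = {i\<in>{1..n}. Z i \<omega> = a}" for a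
      by (auto simp: Zvec_def)
    then show ?thesis
      by (simp add: emp_type_def vec_type_def)
  qed
  \<comment> \<open>applied to V = W and to V = 1, where it identifies D with prob ?A\<close>
  have integral_eq: "(\<integral>\<omega>. indicator ?A \<omega> * V (Zvec \<omega>) (Svec \<omega>) \<partial>M) = D * L"
    if V: "\<And>zz. vec_type n zz = p \<Longrightarrow> prob (Z_event zz) > 0 \<Longrightarrow>
      (\<Sum>ss\<in>PiE {1..n} (\<lambda>_. UNIV). (\<Prod>i\<in>{1..n}. cond_pmf PZS (zz i) (ss i)) * V zz ss) = L"
    for V :: "(nat \<Rightarrow> 'z) \<Rightarrow> (nat \<Rightarrow> 's) \<Rightarrow> real" and L
  proof -
    have "(\<integral>\<omega>. indicator ?A \<omega> * V (Zvec \<omega>) (Svec \<omega>) \<partial>M)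
        = (\<integral>\<omega>. (\<lambda>zz ss. (if vec_type n zz = p then 1 else 0) * V zz ss) (Zvec \<omega>) (Svec \<omega>) \<partial>M)"
      by (intro Bochner_Integration.integral_cong) (auto simp: indicator_def emp_type_Zvec)
    also have "\<dots> = D * L"
      unfolding integral_Zvec_Svec[of "\<lambda>zz ss. (if vec_type n zz = p then 1 else 0) * V zz ss"]
        D_def sum_distrib_right
      using V by (intro sum.cong refl) (auto simp: zero_less_measure_iff)
    finally show ?thesis .
  qed
  have "prob ?A = (\<integral>\<omega>. indicator ?A \<omega> * 1 \<partial>M)"
    by (simp add: Int_absorb2)
  also have "\<dots> = D * 1"
  proof (rule integral_eq)
    fix zz assume "prob (Z_event zz) > 0"
    then have "(\<Prod>i\<in>{1..n}. \<Sum>s\<in>UNIV. cond_pmf PZS (zz i) s) = 1"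
      by (intro prod.neutral ballI sum_cond_pmf_Z_event)
    then show "(\<Sum>ss\<in>PiE {1..n} (\<lambda>_. UNIV). (\<Prod>i\<in>{1..n}. cond_pmf PZS (zz i) (ss i)) * 1) = 1"
      by (simp add: prod_sum_PiE)
  qed
  finally show ?thesis
    using integral_eq assms by simp
qed

end

theorem lemma14:
  fixes M :: "'a measure" and n :: nat
    and Z :: "nat \<Rightarrow> 'a \<Rightarrow> 'z::finite" and S :: "nat \<Rightarrow> 'a \<Rightarrow> 's::finite"
    and f :: "'z \<times> 's \<Rightarrow> real" and PZS :: "'z \<times> 's \<Rightarrow> real"
    and p :: "'z \<Rightarrow> real"
  assumes "prob_space M"
    and Zmeas: "\<And>i. i \<in> {1..n} \<Longrightarrow> Z i \<in> measurable M (count_space UNIV)"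
    and Smeas: "\<And>i. i \<in> {1..n} \<Longrightarrow> S i \<in> measurable M (count_space UNIV)"
    and common_law: "\<And>i z s. i \<in> {1..n} \<Longrightarrow>
        measure M {\<omega>\<in>space M. Z i \<omega> = z \<and> S i \<omega> = s} = PZS (z, s)"
    and cond_indep: "\<And>(zz :: nat \<Rightarrow> 'z) (ss :: nat \<Rightarrow> 's).
        measure M {\<omega>\<in>space M. \<forall>i\<in>{1..n}. Z i \<omega> = zz i} > 0 \<Longrightarrow>
        cprob M {\<omega>\<in>space M. \<forall>i\<in>{1..n}. S i \<omega> = ss i}
                {\<omega>\<in>space M. \<forall>i\<in>{1..n}. Z i \<omega> = zz i}
        = (\<Prod>i\<in>{1..n}. cprob M {\<omega>\<in>space M. S i \<omega> = ss i} {\<omega>\<in>space M. Z i \<omega> = zz i})"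
    and ptype: "measure M {\<omega>\<in>space M. emp_type n Z \<omega> = p} > 0"
  shows "cexp_event M (\<lambda>\<omega>. (\<Sum>i\<in>{1..n}. f (Z i \<omega>, S i \<omega>))\<^sup>2)
            {\<omega>\<in>space M. emp_type n Z \<omega> = p}
       = (real n)\<^sup>2 * (\<Sum>z\<in>UNIV. \<Sum>s\<in>UNIV. p z * cond_pmf PZS z s * f (z, s))\<^sup>2
         + real n * (\<Sum>z\<in>UNIV. \<Sum>s\<in>UNIV. p z * cond_pmf PZS z s * (f (z, s))\<^sup>2)
         - real n * (\<Sum>z\<in>UNIV. p z * (\<Sum>s\<in>UNIV. cond_pmf PZS z s * f (z, s))\<^sup>2)"
proof -
  interpret memoryless_channel M n Z S PZS
    using assms by (intro memoryless_channel.intro memoryless_channel_axioms.intro) auto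
  let ?A = "{\<omega>\<in>space M. emp_type n Z \<omega> = p}"
  have "(\<integral>\<omega>. indicator ?A \<omega> * (\<Sum>i\<in>{1..n}. f (Z i \<omega>, S i \<omega>))\<^sup>2 \<partial>M)
      = (\<integral>\<omega>. indicator ?A \<omega> * (\<lambda>zz ss. (\<Sum>i\<in>{1..n}. f (zz i, ss i))\<^sup>2) (Zvec \<omega>) (Svec \<omega>) \<partial>M)"
    by (simp add: Zvec_def Svec_def)
  also have "\<dots> = prob ?A *
      ((real n)\<^sup>2 * (\<Sum>z\<in>UNIV. \<Sum>s\<in>UNIV. p z * cond_pmf PZS z s * f (z, s))\<^sup>2
       + real n * (\<Sum>z\<in>UNIV. \<Sum>s\<in>UNIV. p z * cond_pmf PZS z s * (f (z, s))\<^sup>2)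
       - real n * (\<Sum>z\<in>UNIV. p z * (\<Sum>s\<in>UNIV. cond_pmf PZS z s * f (z, s))\<^sup>2))"
    by (rule integral_type_event, rule sum_PiE_type_square_sum) (auto intro: sum_cond_pmf_Z_event)
  finally show ?thesis
    using ptype by (simp add: cexp_event_def)
qed

end
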